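(* Let $P^1(z) = \tfrac12 z(1+z)$, $P^2(z) = z(1+z)$, and let $U^2$ be an attracting petal of $P^2$ at its parabolic fixed point $0$ as described in the context. Let $V$ be an open subset of $\mathrm D(0,\tfrac13)$ and let $\varepsilon > 0$. Then there exists $m_0$ such that for every $m \ge m_0$ and every $z_0 \in (P^1)^{\circ m}(V)$, \[ \mathrm m\Big(V \cap (P^1)^{\circ -m}\big((\mathbb C \setminus U^2) + z_0\big)\Big) < \varepsilon. \]
   Context: $\mathrm m$ is two-dimensional Lebesgue measure, $\mathrm D(a,r)$ is the open disc of centre $a$ and radius $r$, $(P^1)^{\circ m}$ is the $m$-fold iterate and $(P^1)^{\circ -m}(X)$ denotes the full preimage of $X$ under it. For $X \subset \mathbb C$ and $z_0 \in \mathbb C$, $X + z_0 = \{z \in \mathbb C : z - z_0 \in X\}$. The polynomial $P^2$ has a parabolic fixed point at $0$ with multiplier $1$, with attracting direction the negative real axis and repelling direction the positive real axis. $U^2$ is an open attracting petal for $P^2$ at $0$: an open set with $0 \in \partial U^2$, $P^2(U^2) \subset U^2$, on which $P^2$ is conformally conjugate to $z \mapsto z+1$, and such that $\mathbb C \setminus U^2$ has a cusp at $0$ in the direction of the positive real axis, i.e. for every $\theta > 0$ there is $r > 0$ with $\mathrm D(0,r) \setminus U^2 \subset \{0\} \cup \{z \ne 0 : |\arg z| < \theta\}$. *)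

theory Defs
  imports "HOL-Analysis.Analysis"
begin

definition P1 :: "complex \<Rightarrow> complex" where
  "P1 z = (1/2) * z * (1 + z)"

definition P2 :: "complex \<Rightarrow> complex" where
  "P2 z = z * (1 + z)"

text \<open>Open attracting petal of P2 at the parabolic fixed point 0, as in the context:
  open, 0 on its boundary, forward invariant, P2 conformally conjugate on it to
  translation by 1, and the complement has a cusp at 0 along the positive real axis.\<close>
definition attracting_petal_P2 :: "complex set \<Rightarrow> bool" where
  "attracting_petal_P2 U \<longleftrightarrow>
     open U \<and> 0 \<in> frontier U \<and> P2 ` U \<subseteq> U \<and>
     (\<exists>\<phi>. \<phi> holomorphic_on U \<and> inj_on \<phi> U \<and> (\<forall>z\<in>U. \<phi> (P2 z) = \<phi> z + 1)) \<and>
     (\<forall>\<theta>>0. \<exists>r>0. ball 0 r - U \<subseteq> {0} \<union> {z. z \<noteq> 0 \<and> \<bar>Arg z\<bar> < \<theta>})"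

end

theory Submission
  imports Defs
begin

(* Write $f = (P^1)^m$ and $M = 2^m$.  On the disc of radius 1/3 the map $P^1$
   behaves like $z \<mapsto> z/2$, so $f$ maps $V$ into the disc of radius $1/M$, and the rescaled
   map $M f$ is injective with an $e^6$-Lipschitz inverse.  Hence for $w \<in> V$ and
   $z_0 = f(w_0)$ the difference $u = f(w) - z_0$ has $|u| < 2/M$.  If in addition $u$ lies
   outside the petal $U^2$, the cusp condition at 0 forces $|\arg u| < 1/n$ once $2/M$ is below
   the corresponding radius; so $u$ lies in a thin sector, which is covered by $2n+1$ discs of
   radius $4/(nM)$.  Pulling these discs back by $f$ gives $2n+1$ discs of radius $8e^6/n$,
   of total area $O(1/n)$, and choosing $n$ large makes this smaller than $\varepsilon$. *)

lemma norm_P1: "cmod (P1 z) = cmod z * cmod (1 + z) / 2"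
  by (simp add: P1_def norm_mult)

lemma P1_diff: "P1 a - P1 b = (a - b) * (1 + a + b) / 2"
  by (simp add: P1_def field_simps)

lemma P1_contracts: "cmod z \<le> 1/3 \<Longrightarrow> cmod (P1 z) \<le> 2/3 * cmod z"
proof -
  assume "cmod z \<le> 1/3"
  then have "cmod (1 + z) \<le> 4/3"
    using norm_triangle_ineq[of 1 z] by simp
  then have "cmod z * cmod (1 + z) \<le> cmod z * (4/3)"
    by (rule mult_left_mono) simp
  then show ?thesis
    by (simp add: norm_P1)
qed

lemma P1_iter_norm_le: "cmod z \<le> 1/3 \<Longrightarrow> cmod ((P1 ^^ k) z) \<le> 1/3 * (2/3) ^ k"
proof (induction k)
  case 0
  then show ?case by simp
next
  case (Suc k)
  have "(2/3 :: real) ^ k \<le> 1"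
    by (simp add: power_le_one)
  with Suc have "cmod ((P1 ^^ k) z) \<le> 1/3"
    by linarith
  then have "cmod ((P1 ^^ Suc k) z) \<le> 2/3 * cmod ((P1 ^^ k) z)"
    using P1_contracts by simp
  also have "\<dots> \<le> 2/3 * (1/3 * (2/3) ^ k)"
    using Suc by simp
  finally show ?case by simp
qed

(* Near 0, $P^1$ behaves like $z/2$: the rescaled iterates $2^k (P^1)^k$ stay bounded,
   since $\prod_j (1 + (2/3)^j/3) \le e$. *)
lemma P1_iter_rescaled_le:
  "cmod z \<le> 1/3 \<Longrightarrow> 2 ^ k * cmod ((P1 ^^ k) z) \<le> 1/3 * exp (1 - (2/3) ^ k)"
proof (induction k)
  case 0
  then show ?case by simp
next
  case (Suc k)
  let ?w = "(P1 ^^ k) z" and ?q = "1/3 * (2/3::real) ^ k"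
  have w: "cmod ?w \<le> ?q"
    using P1_iter_norm_le Suc.prems by blast
  have "cmod (1 + ?w) \<le> 1 + ?q"
    using norm_triangle_ineq[of 1 ?w] w by simp
  then have "2 ^ Suc k * cmod ((P1 ^^ Suc k) z) \<le> (2 ^ k * cmod ?w) * (1 + ?q)"
    by (simp add: norm_P1 mult_left_mono)
  also have "\<dots> \<le> (1/3 * exp (1 - (2/3) ^ k)) * exp ?q"
  proof (rule mult_mono)
    show "2 ^ k * cmod ?w \<le> 1/3 * exp (1 - (2/3) ^ k)"
      using Suc by blast
    show "1 + ?q \<le> exp ?q"
      by (rule exp_ge_add_one_self)
  qed simp_all
  also have "\<dots> = 1/3 * exp (1 - (2/3) ^ Suc k)"
    by (simp add: mult.assoc flip: exp_add)
  finally show ?case .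
qed

lemma P1_iter_rescaled_lt_1: "cmod z \<le> 1/3 \<Longrightarrow> 2 ^ k * cmod ((P1 ^^ k) z) < 1"
proof -
  assume "cmod z \<le> 1/3"
  then have "2 ^ k * cmod ((P1 ^^ k) z) \<le> 1/3 * exp (1 - (2/3) ^ k)"
    by (rule P1_iter_rescaled_le)
  also have "\<dots> \<le> 1/3 * exp 1"
    by simp
  also have "\<dots> < 1"
    using e_less_272 by simp
  finally show ?thesis .
qed

lemma exp_neg_three_le: "0 \<le> x \<Longrightarrow> x \<le> 2/3 \<Longrightarrow> exp (-3 * x) \<le> 1 - (x::real)"
proof -
  assume x: "0 \<le> x" "x \<le> 2/3"
  have "x * (3 * x) \<le> x * 2"
    using x by (intro mult_left_mono) simp_all
  then have "1 \<le> (1 + 3 * x) * (1 - x)"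
    by (simp add: algebra_simps)
  also have "\<dots> \<le> exp (3 * x) * (1 - x)"
    using x by (intro mult_right_mono) (auto simp: exp_ge_add_one_self)
  finally show ?thesis
    by (simp add: exp_minus field_simps)
qed

(* Conversely, the rescaled iterates shrink distances by at most the factor $e^{-6}$,
   because $|1 + a + b| \ge 1 - (2/3)^{j+1}$ along the orbits and
   $\prod_{j \ge 1} (1 - (2/3)^j) \ge e^{-6}$. *)
lemma P1_iter_rescaled_expansion:
  assumes "cmod z \<le> 1/3" "cmod w \<le> 1/3"
  shows "exp (-6 + 6 * (2/3) ^ k) * cmod (z - w) \<le> 2 ^ k * cmod ((P1 ^^ k) z - (P1 ^^ k) w)"
proof (induction k)
  case 0
  then show ?case by simp
next
  case (Suc k)
  let ?a = "(P1 ^^ k) z" and ?b = "(P1 ^^ k) w" and ?x = "(2/3::real) ^ Suc k"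
  have "cmod ?a \<le> 1/3 * (2/3) ^ k" "cmod ?b \<le> 1/3 * (2/3) ^ k"
    using P1_iter_norm_le assms by blast+
  moreover have "1 - cmod ?a - cmod ?b \<le> cmod (1 + ?a + ?b)"
  proof -
    have "1 = cmod ((1 + ?a + ?b) - (?a + ?b))"
      by simp
    also have "\<dots> \<le> cmod (1 + ?a + ?b) + cmod (?a + ?b)"
      by (rule norm_triangle_ineq4)
    also have "\<dots> \<le> cmod (1 + ?a + ?b) + cmod ?a + cmod ?b"
      using norm_triangle_ineq[of ?a ?b] by simp
    finally show ?thesis by simp
  qed
  ultimately have "1 - ?x \<le> cmod (1 + ?a + ?b)"
    by simp
  moreover have "exp (-3 * ?x) \<le> 1 - ?x"
    by (rule exp_neg_three_le) (simp_all add: power_le_one)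
  ultimately have factor: "exp (-3 * ?x) \<le> cmod (1 + ?a + ?b)"
    by linarith
  have "exp (-6 + 6 * ?x) * cmod (z - w) = (exp (-6 + 6 * (2/3) ^ k) * cmod (z - w)) * exp (-3 * ?x)"
    by (simp add: mult_ac flip: exp_add)
  also have "\<dots> \<le> (2 ^ k * cmod (?a - ?b)) * cmod (1 + ?a + ?b)"
    using Suc.IH factor by (rule mult_mono) simp_all
  also have "\<dots> = 2 ^ Suc k * cmod ((P1 ^^ Suc k) z - (P1 ^^ Suc k) w)"
    by (simp add: P1_diff norm_mult norm_divide)
  finally show ?case .
qed

lemma P1_iter_inverse_lipschitz:
  assumes "cmod z \<le> 1/3" "cmod w \<le> 1/3"
  shows "dist z w \<le> exp 6 * 2 ^ k * dist ((P1 ^^ k) z) ((P1 ^^ k) w)"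
proof -
  have "exp (-6) * cmod (z - w) \<le> exp (-6 + 6 * (2/3) ^ k) * cmod (z - w)"
    by (intro mult_right_mono) auto
  also have "\<dots> \<le> 2 ^ k * cmod ((P1 ^^ k) z - (P1 ^^ k) w)"
    using assms by (rule P1_iter_rescaled_expansion)
  finally have "exp (-6) * dist z w \<le> 2 ^ k * dist ((P1 ^^ k) z) ((P1 ^^ k) w)"
    by (simp add: dist_norm)
  then have "exp 6 * (exp (-6) * dist z w) \<le> exp 6 * (2 ^ k * dist ((P1 ^^ k) z) ((P1 ^^ k) w))"
    by (rule mult_left_mono) simp
  moreover have "exp 6 * (exp (-6) * dist z w) = dist z w"
    by (simp add: mult.assoc[symmetric] flip: exp_add)
  ultimately show ?thesis
    by (simp add: mult.assoc)
qed

lemma abs_Im_le_Arg: "\<bar>Im u\<bar> \<le> \<bar>Arg u\<bar> * cmod u"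
proof (cases "u = 0")
  case False
  then have "\<bar>Im u\<bar> = \<bar>sin (Arg u)\<bar> * cmod u"
    by (simp add: sin_Arg abs_mult)
  also have "\<dots> \<le> \<bar>Arg u\<bar> * cmod u"
    by (intro mult_right_mono abs_sin_x_le_abs_x) simp
  finally show ?thesis .
qed simp

lemma thin_sector_cover:
  fixes a :: complex and R s :: real and n :: nat
  assumes "0 < R" "1 \<le> s * n"
  shows "{z. cmod (z - a) < R \<and> \<bar>Im (z - a)\<bar> \<le> s * cmod (z - a)}
           \<subseteq> (\<Union>j\<in>{-int n..int n}. ball (a + of_real (j * R / n)) (2 * s * R))"
proof
  fix z assume "z \<in> {z. cmod (z - a) < R \<and> \<bar>Im (z - a)\<bar> \<le> s * cmod (z - a)}"
  then have u: "cmod (z - a) < R" "\<bar>Im (z - a)\<bar> \<le> s * cmod (z - a)"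
    by auto
  have n: "real n > 0"
    using assms(2) by (cases n) auto
  have s: "s > 0"
  proof (rule ccontr)
    assume "\<not> s > 0"
    then have "s * n \<le> 0"
      by (simp add: mult_nonpos_nonneg)
    with assms(2) show False by simp
  qed
  define x where "x = Re (z - a) * n / R"
  define j where "j = \<lfloor>x\<rfloor>"
  have "\<bar>x\<bar> < n"
    using abs_Re_le_cmod[of "z - a"] u(1) assms(1) n
    by (simp add: x_def abs_mult divide_less_eq mult.commute mult_strict_left_mono)
  then have "j \<in> {-int n..int n}"
    unfolding j_def by (simp add: le_floor_iff floor_le_iff abs_less_iff)
  have "\<bar>x - j\<bar> < 1"
    using floor_correct[of x] unfolding j_def by linarith
  then have "\<bar>Re (z - a) - j * R / n\<bar> < R / n"
    using assms(1) n by (simp add: x_def field_simps abs_less_iff)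
  also have "R / n \<le> s * R"
    using assms n by (simp add: field_simps)
  finally have re: "\<bar>Re (z - a - of_real (j * R / n))\<bar> < s * R"
    by simp
  have "s * cmod (z - a) \<le> s * R"
    using u(1) s by simp
  then have im: "\<bar>Im (z - a - of_real (j * R / n))\<bar> \<le> s * R"
    using u(2) by simp
  have "dist z (a + of_real (j * R / n)) \<le> \<bar>Re (z - a - of_real (j * R / n))\<bar> + \<bar>Im (z - a - of_real (j * R / n))\<bar>"
    using cmod_le[of "z - a - of_real (j * R / n)"] by (simp add: dist_norm algebra_simps)
  also have "\<dots> < 2 * s * R"
    using re im by linarith
  finally show "z \<in> (\<Union>j\<in>{-int n..int n}. ball (a + of_real (j * R / n)) (2 * s * R))"
    using \<open>j \<in> {-int n..int n}\<close> by (auto simp: dist_commute)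
qed

lemma preimage_ball_in_cball:
  fixes g :: "'a::metric_space \<Rightarrow> 'b::metric_space"
  assumes "0 \<le> K" and lip: "\<And>w w'. w \<in> A \<Longrightarrow> w' \<in> A \<Longrightarrow> dist w w' \<le> K * dist (g w) (g w')"
  shows "\<exists>p. A \<inter> g -` ball c \<delta> \<subseteq> cball p (2 * K * \<delta>)"
proof (cases "A \<inter> g -` ball c \<delta> = {}")
  case True
  then show ?thesis by blast
next
  case False
  then obtain q where q: "q \<in> A" "dist c (g q) < \<delta>"
    by auto
  have "w \<in> cball q (2 * K * \<delta>)" if w: "w \<in> A" "dist c (g w) < \<delta>" for w
  proof -
    have "dist (g q) (g w) \<le> 2 * \<delta>"
      using dist_triangle3[of "g q" "g w" c] q(2) w(2) by linarith
    then have "K * dist (g q) (g w) \<le> K * (2 * \<delta>)"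
      using assms(1) by (rule mult_left_mono)
    with lip[OF q(1) w(1)] show ?thesis
      by (simp add: mult_ac)
  qed
  then have "A \<inter> g -` ball c \<delta> \<subseteq> cball q (2 * K * \<delta>)"
    by auto
  then show ?thesis ..
qed

lemma emeasure_le_of_ball_cover:
  fixes g :: "'a::euclidean_space \<Rightarrow> 'b::metric_space"
  assumes "0 \<le> K" and lip: "\<And>w w'. w \<in> A \<Longrightarrow> w' \<in> A \<Longrightarrow> dist w w' \<le> K * dist (g w) (g w')"
    and "finite J" "0 \<le> \<delta>" and cover: "g ` A \<subseteq> (\<Union>j\<in>J. ball (c j) \<delta>)"
  shows "emeasure lborel A \<le> ennreal (card J * (unit_ball_vol DIM('a) * (2 * K * \<delta>) ^ DIM('a)))"
proof -
  have "\<exists>p. A \<inter> g -` ball (c j) \<delta> \<subseteq> cball p (2 * K * \<delta>)" for j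
    by (rule preimage_ball_in_cball) (use assms(1) lip in auto)
  then obtain p where p: "\<And>j. A \<inter> g -` ball (c j) \<delta> \<subseteq> cball (p j) (2 * K * \<delta>)"
    by metis
  have "A \<subseteq> (\<Union>j\<in>J. cball (p j) (2 * K * \<delta>))"
    using cover p by blast
  then have "emeasure lborel A \<le> emeasure lborel (\<Union>j\<in>J. cball (p j) (2 * K * \<delta>))"
    by (rule emeasure_mono) (use \<open>finite J\<close> in \<open>simp add: borel_closed closed_UN\<close>)
  also have "\<dots> \<le> (\<Sum>j\<in>J. emeasure lborel (cball (p j) (2 * K * \<delta>)))"
    using \<open>finite J\<close> by (intro emeasure_subadditive_finite) auto
  also have "\<dots> = (\<Sum>j\<in>J. ennreal (unit_ball_vol DIM('a) * (2 * K * \<delta>) ^ DIM('a)))"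
    using assms by (simp add: emeasure_cball)
  also have "\<dots> = ennreal (card J * (unit_ball_vol DIM('a) * (2 * K * \<delta>) ^ DIM('a)))"
    by (simp add: ennreal_of_nat_eq_real_of_nat ennreal_mult')
  finally show ?thesis .
qed

lemma two_lt_pow_mult_eventually:
  fixes r :: real
  assumes "0 < r"
  shows "\<exists>m0::nat. \<forall>m\<ge>m0. 2 < 2 ^ m * r"
proof -
  obtain m0 :: nat where m0: "2 / r < 2 ^ m0"
    using real_arch_pow[of 2 "2 / r"] by auto
  have "2 < 2 ^ m * r" if "m0 \<le> m" for m
  proof -
    have "2 < 2 ^ m0 * r"
      using m0 assms by (simp add: divide_less_eq)
    also have "\<dots> \<le> 2 ^ m * r"
      using that assms by (intro mult_right_mono power_increasing) simp_all
    finally show ?thesis .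
  qed
  then show ?thesis
    by blast
qed

lemma emeasure_cusp_preimage_le:
  fixes U V :: "complex set" and r :: real and n m :: nat
  assumes cusp: "ball 0 r - U \<subseteq> {0} \<union> {z. z \<noteq> 0 \<and> \<bar>Arg z\<bar> < 1 / n}"
    and n: "1 \<le> n" and m: "2 < 2 ^ m * r"
    and V: "V \<subseteq> ball 0 (1/3)" and z0: "z0 \<in> (P1 ^^ m) ` V"
  shows "emeasure lborel (V \<inter> (P1 ^^ m) -` {z. z - z0 \<in> - U}) \<le> ennreal (192 * pi * exp 6 ^ 2 / n)"
proof -
  define f where "f = P1 ^^ m"
  define M :: real where "M = 2 ^ m"
  define R where "R = 2 / M"
  define A where "A = V \<inter> f -` {z. z - z0 \<in> - U}"
  have M: "M > 0" and R: "R > 0" "R < r"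
    using m by (simp_all add: M_def R_def divide_less_eq mult.commute)
  have inV: "cmod w \<le> 1/3" if "w \<in> V" for w
    using V that by auto
  have small: "cmod (f w) < 1 / M" if "w \<in> V" for w
    using P1_iter_rescaled_lt_1[OF inV[OF that], of m] M by (simp add: f_def M_def field_simps)
  have lip: "dist w w' \<le> (exp 6 * M) * dist (f w) (f w')" if "w \<in> A" "w' \<in> A" for w w'
    using P1_iter_inverse_lipschitz[OF inV inV, of w w' m] that by (simp add: A_def f_def M_def)
  have "f ` A \<subseteq> {z. cmod (z - z0) < R \<and> \<bar>Im (z - z0)\<bar> \<le> 1 / n * cmod (z - z0)}"
  proof clarify
    fix w assume "w \<in> A"
    then have w: "w \<in> V" "f w - z0 \<notin> U"
      by (auto simp: A_def)
    obtain w0 where "w0 \<in> V" "z0 = f w0"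
      using z0 by (auto simp: f_def)
    then have near: "cmod (f w - z0) < R"
      using norm_triangle_ineq4[of "f w" z0] small[OF w(1)] small[of w0] by (simp add: R_def)
    then have "f w - z0 \<in> ball 0 r - U"
      using R(2) w(2) by simp
    then have "f w - z0 = 0 \<or> \<bar>Arg (f w - z0)\<bar> < 1 / n"
      using cusp by blast
    then have "\<bar>Arg (f w - z0)\<bar> * cmod (f w - z0) \<le> 1 / n * cmod (f w - z0)"
      using mult_right_mono[of "\<bar>Arg (f w - z0)\<bar>" "1 / n" "cmod (f w - z0)"] by auto
    then show "cmod (f w - z0) < R \<and> \<bar>Im (f w - z0)\<bar> \<le> 1 / n * cmod (f w - z0)"
      using abs_Im_le_Arg near order_trans by blast
  qed
  also have "\<dots> \<subseteq> (\<Union>j\<in>{-int n..int n}. ball (z0 + of_real (j * R / n)) (2 * (1 / n) * R))"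
    using R(1) n by (intro thin_sector_cover) simp_all
  finally have "emeasure lborel A \<le> ennreal (card {-int n..int n} * (unit_ball_vol DIM(complex)
                  * (2 * (exp 6 * M) * (2 * (1 / n) * R)) ^ DIM(complex)))"
    using M R by (intro emeasure_le_of_ball_cover) (simp_all add: lip)
  also have "\<dots> = ennreal ((2 * n + 1) * (pi * (8 * exp 6 / n) ^ 2))"
    using M by (simp add: R_def unit_ball_vol_2 field_simps)
  also have "\<dots> \<le> ennreal (192 * pi * exp 6 ^ 2 / n)"
  proof (intro ennreal_leI)
    have "(2 * n + 1) * (pi * (8 * exp 6 / n) ^ 2) = (2 * n + 1) / n * (64 * pi * exp 6 ^ 2 / n)"
      by (simp add: field_simps power2_eq_square)
    also have "\<dots> \<le> 3 * (64 * pi * exp 6 ^ 2 / n)"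
      using n by (intro mult_right_mono) (simp_all add: field_simps)
    finally show "(2 * n + 1) * (pi * (8 * exp 6 / n) ^ 2) \<le> 192 * pi * exp 6 ^ 2 / n"
      by simp
  qed
  finally show ?thesis
    by (simp add: A_def f_def)
qed

(* The theorem: choose $n$ with $192 \pi e^{12} / n < \varepsilon$, then the radius $r$ given by
   the cusp of the petal for the opening $1/n$, then $m_0$ with $2^{1-m_0} < r$. *)
theorem lemma2p2:
  fixes U2 V :: "complex set" and \<epsilon> :: real
  assumes "attracting_petal_P2 U2"
    and "open V" and "V \<subseteq> ball 0 (1/3)"
    and "\<epsilon> > 0"
  shows "\<exists>m0::nat. \<forall>m\<ge>m0. \<forall>z0 \<in> (P1 ^^ m) ` V.
           emeasure lborel (V \<inter> (P1 ^^ m) -` {z. z - z0 \<in> - U2}) < ennreal \<epsilon>"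
proof -
  define C where "C = 192 * pi * exp 6 ^ 2"
  obtain n :: nat where n: "C / \<epsilon> < n"
    using reals_Archimedean2 by blast
  moreover have "0 < C / \<epsilon>"
    using assms(4) by (simp add: C_def)
  ultimately have "0 < real n"
    by linarith
  then have n_pos: "1 \<le> n" and bound: "C / n < \<epsilon>"
    using n assms(4) by (simp_all add: divide_less_eq mult.commute)
  have cusp: "\<forall>\<theta>>0. \<exists>r>0. ball 0 r - U2 \<subseteq> {0} \<union> {z. z \<noteq> 0 \<and> \<bar>Arg z\<bar> < \<theta>}"
    using assms(1) unfolding attracting_petal_P2_def by blast
  obtain r where r: "r > 0" "ball 0 r - U2 \<subseteq> {0} \<union> {z. z \<noteq> 0 \<and> \<bar>Arg z\<bar> < 1 / n}"
    using cusp[rule_format, of "1 / n"] n_pos by auto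
  obtain m0 :: nat where m0: "\<forall>m\<ge>m0. 2 < 2 ^ m * r"
    using two_lt_pow_mult_eventually[OF r(1)] by blast
  show ?thesis
  proof (intro exI allI impI ballI)
    fix m z0 assume "m0 \<le> m" "z0 \<in> (P1 ^^ m) ` V"
    moreover from this(1) have "2 < 2 ^ m * r"
      using m0 by blast
    ultimately have "emeasure lborel (V \<inter> (P1 ^^ m) -` {z. z - z0 \<in> - U2}) \<le> ennreal (C / n)"
      unfolding C_def using r(2) n_pos assms(3) by (intro emeasure_cusp_preimage_le) auto
    also have "\<dots> < ennreal \<epsilon>"
      using bound assms(4) by (simp add: ennreal_lessI)
    finally show "emeasure lborel (V \<inter> (P1 ^^ m) -` {z. z - z0 \<in> - U2}) < ennreal \<epsilon>" .
  qed
qed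

end
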